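(* For all $c\in[0,\overline{c}]$, $\lim_{x\to\infty}V(x,c)=\overline{c}/q$.
   Context: Cramér–Lundberg model: the uncontrolled surplus is $X_t=x+pt-\sum_{i=1}^{N_t}U_i$, where $x\ge0$ is the initial surplus, $p>0$ the premium rate, $N_t$ a Poisson process with intensity $\beta>0$, and the claims $U_i$ are i.i.d. positive random variables, independent of $N$, with continuous distribution function $F$; $p>\beta\mathbb{E}[U_1]$. Standing assumption (A1): $F$ is globally Lipschitz with constant $K>0$. Let $(\mathcal{F}_t)$ be the completed filtration generated by $X$. Fix $\overline{c}>0$ and $q>0$. $\Pi_{x,c,\overline{c}}$ is the set of càdlàg, adapted, non-decreasing processes $C$ with $c\le C_t\le\overline{c}$; $X^C_t=X_t-\int_0^tC_sds$ ($X_0=x$), $\tau=\inf\{t\ge0:X^C_t<0\}$, $J(x;C)=\mathbb{E}[\int_0^\tau e^{-qs}C_sds]$, $V(x,c)=\sup_{C\in\Pi_{x,c,\overline{c}}}J(x;C)$. Convention: only strategies are considered such that if $C_{t^-}=p$ and $X^C_t=0$ for some $t>0$ then $C_s=p$ for $s\ge t$ until ruin; the only strategy in $\Pi_{0,p,\overline{c}}$ is to pay at rate $p$ until the first claim. *)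

theory Defs
  imports "HOL-Probability.Probability"
begin

text \<open>The Poisson process N
with intensity beta is realised through i.i.d. Exp(beta) inter-arrival times T i:
the n-th claim arrives at time T 0 + ... + T n.\<close>

definition CL_N :: "(nat \<Rightarrow> 'a \<Rightarrow> real) \<Rightarrow> real \<Rightarrow> 'a \<Rightarrow> nat" where
  "CL_N T t \<omega> = card {n. (\<Sum>i\<le>n. T i \<omega>) \<le> t}"

definition CL_X :: "real \<Rightarrow> real \<Rightarrow> (nat \<Rightarrow> 'a \<Rightarrow> real) \<Rightarrow> (nat \<Rightarrow> 'a \<Rightarrow> real)
    \<Rightarrow> real \<Rightarrow> 'a \<Rightarrow> real" where
  "CL_X x p T U t \<omega> = x + p * t - (\<Sum>i<CL_N T t \<omega>. U i \<omega>)"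

definition CL_XC :: "real \<Rightarrow> real \<Rightarrow> (nat \<Rightarrow> 'a \<Rightarrow> real) \<Rightarrow> (nat \<Rightarrow> 'a \<Rightarrow> real)
    \<Rightarrow> (real \<Rightarrow> 'a \<Rightarrow> real) \<Rightarrow> real \<Rightarrow> 'a \<Rightarrow> real" where
  "CL_XC x p T U C t \<omega> = CL_X x p T U t \<omega> - integral {0..t} (\<lambda>s. C s \<omega>)"

definition ruin_time :: "real \<Rightarrow> real \<Rightarrow> (nat \<Rightarrow> 'a \<Rightarrow> real) \<Rightarrow> (nat \<Rightarrow> 'a \<Rightarrow> real)
    \<Rightarrow> (real \<Rightarrow> 'a \<Rightarrow> real) \<Rightarrow> 'a \<Rightarrow> ereal" where
  "ruin_time x p T U C \<omega> = Inf {ereal t | t. 0 \<le> t \<and> CL_XC x p T U C t \<omega> < 0}"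

definition CL_filtration :: "'a measure \<Rightarrow> real \<Rightarrow> real \<Rightarrow> (nat \<Rightarrow> 'a \<Rightarrow> real)
    \<Rightarrow> (nat \<Rightarrow> 'a \<Rightarrow> real) \<Rightarrow> real \<Rightarrow> 'a set set" where
  "CL_filtration M x p T U t =
     {A. A \<subseteq> space M \<and>
        (\<exists>B \<in> sigma_sets (space M)
               {CL_X x p T U s -` D \<inter> space M | s D. 0 \<le> s \<and> s \<le> t \<and> D \<in> sets borel}.
          \<exists>N \<in> null_sets M. (A - B) \<union> (B - A) \<subseteq> N)}"

definition admissible :: "'a measure \<Rightarrow> real \<Rightarrow> real \<Rightarrow> (nat \<Rightarrow> 'a \<Rightarrow> real)
    \<Rightarrow> (nat \<Rightarrow> 'a \<Rightarrow> real) \<Rightarrow> real \<Rightarrow> real \<Rightarrow> (real \<Rightarrow> 'a \<Rightarrow> real) \<Rightarrow> bool" where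
  "admissible M x p T U c cbar C \<longleftrightarrow>
     \<comment> \<open>cadlag paths\<close>
     (\<forall>\<omega>\<in>space M. \<forall>t\<ge>0. continuous (at_right t) (\<lambda>s. C s \<omega>)) \<and>
     (\<forall>\<omega>\<in>space M. \<forall>t>0. \<exists>l. ((\<lambda>s. C s \<omega>) \<longlongrightarrow> l) (at_left t)) \<and>
     \<comment> \<open>adapted to the completed filtration generated by X\<close>
     (\<forall>t\<ge>0. \<forall>D\<in>sets borel. {\<omega>\<in>space M. C t \<omega> \<in> D} \<in> CL_filtration M x p T U t) \<and>
     \<comment> \<open>non-decreasing, with values in [c, cbar]\<close>
     (\<forall>\<omega>\<in>space M. mono_on {0..} (\<lambda>t. C t \<omega>)) \<and>
     (\<forall>\<omega>\<in>space M. \<forall>t\<ge>0. c \<le> C t \<omega> \<and> C t \<omega> \<le> cbar) \<and>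
     \<comment> \<open>convention: once paying p with zero surplus, keep paying p until ruin\<close>
     (\<forall>\<omega>\<in>space M. \<forall>t>0.
        ((\<lambda>s. C s \<omega>) \<longlongrightarrow> p) (at_left t) \<and> CL_XC x p T U C t \<omega> = 0 \<longrightarrow>
        (\<forall>s\<ge>t. ereal s < ruin_time x p T U C \<omega> \<longrightarrow> C s \<omega> = p)) \<and>
     \<comment> \<open>convention: the only strategy in Pi_{0,p,cbar} pays p until the first claim (= ruin)\<close>
     (x = 0 \<and> c = p \<longrightarrow>
        (\<forall>\<omega>\<in>space M. \<forall>t\<ge>0. ereal t < ruin_time x p T U C \<omega> \<longrightarrow> C t \<omega> = p))"

definition CL_J :: "'a measure \<Rightarrow> real \<Rightarrow> real \<Rightarrow> real \<Rightarrow> (nat \<Rightarrow> 'a \<Rightarrow> real)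
    \<Rightarrow> (nat \<Rightarrow> 'a \<Rightarrow> real) \<Rightarrow> (real \<Rightarrow> 'a \<Rightarrow> real) \<Rightarrow> ennreal" where
  "CL_J M q x p T U C =
     (\<integral>\<^sup>+ \<omega>. (\<integral>\<^sup>+ s. indicator {s. 0 \<le> s \<and> ereal s < ruin_time x p T U C \<omega>} s
                     * ennreal (exp (- q * s) * C s \<omega>) \<partial>lborel) \<partial>M)"

definition CL_V :: "'a measure \<Rightarrow> real \<Rightarrow> real \<Rightarrow> real \<Rightarrow> (nat \<Rightarrow> 'a \<Rightarrow> real)
    \<Rightarrow> (nat \<Rightarrow> 'a \<Rightarrow> real) \<Rightarrow> real \<Rightarrow> real \<Rightarrow> ennreal" where
  "CL_V M q cbar p T U x c =
     (SUP C \<in> {C. admissible M x p T U c cbar C}. CL_J M q x p T U C)"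

end

theory Submission
  imports Defs
begin

text \<open>
  No strategy beats paying the maximal rate \<open>cbar\<close> forever, which is worth
  \<open>\<integral> cbar exp(-q s) ds = cbar/q\<close> over \<open>[0, \<infinity>)\<close>. Conversely, pay \<open>cbar\<close> from the start and
  fix a horizon \<open>t0\<close> with \<open>exp(-q t0) = \<eta>\<close>. With probability at least \<open>1 - \<eta>/2\<close> at most
  \<open>n\<close> claims arrive before \<open>t0 + 1\<close>, because \<open>n + 1\<close> independent exponential inter-arrival
  times are unlikely to all be short; and with probability at least \<open>1 - \<eta>/2\<close> these \<open>n\<close>
  claims together with the dividends paid up to \<open>t0 + 1\<close> stay below \<open>x\<close> once \<open>x\<close> is large.
  On the intersection of the two events there is no ruin before \<open>t0 + 1\<close>, so
  \<open>V(x, c) \<ge> (cbar/q)(1 - \<eta>)\<^sup>2\<close> for all large \<open>x\<close>.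
\<close>

lemma (in prob_space) indep_sets_reindex:
  assumes "indep_sets F (f ` I)" and "inj_on f I"
  shows "indep_sets (\<lambda>i. F (f i)) I"
proof (rule indep_setsI)
  show "F (f i) \<subseteq> events" if "i \<in> I" for i
    using assms(1) that by (auto simp: indep_sets_def)
next
  fix A J assume J: "J \<noteq> {}" "J \<subseteq> I" "finite J" and A: "\<forall>j\<in>J. A j \<in> F (f j)"
  define B where "B = A \<circ> the_inv_into I f"
  have inj: "inj_on f J" using assms(2) J(2) by (rule inj_on_subset)
  have B: "B (f j) = A j" if "j \<in> J" for j
    using the_inv_into_f_f[OF assms(2)] that J(2) by (auto simp: B_def)
  have "prob (\<Inter>k\<in>f ` J. B k) = (\<Prod>k\<in>f ` J. prob (B k))"
    by (rule indep_setsD[OF assms(1)]) (use J A B in auto)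
  then show "prob (\<Inter>j\<in>J. A j) = (\<Prod>j\<in>J. prob (A j))"
    by (simp add: prod.reindex[OF inj] B)
qed

lemma (in prob_space) indep_vars_reindex:
  assumes "indep_vars M' X (f ` I)" and "inj_on f I"
  shows "indep_vars (\<lambda>i. M' (f i)) (\<lambda>i. X (f i)) I"
  using assms indep_sets_reindex[of "\<lambda>k. {X k -` A \<inter> space M |A. A \<in> sets (M' k)}" f I]
  by (auto simp: indep_vars_def2)

lemma (in prob_space) AE_exponential_nonneg:
  fixes T :: "nat \<Rightarrow> 'a \<Rightarrow> real"
  assumes "\<And>i. distributed M lborel (T i) (exponential_density \<beta>)" and "0 < \<beta>"
  shows "AE \<omega> in M. \<forall>i. 0 \<le> T i \<omega>"
proof -
  have "prob {\<omega>\<in>space M. T i \<omega> \<le> 0} = 0" for i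
    using exponential_distributedD_le[OF assms(1) order_refl assms(2)] by simp
  then have "AE \<omega> in M. 0 < T i \<omega>" for i
    using distributed_measurable[OF assms(1)]
    by (subst AE_iff_measurable[of "{\<omega>\<in>space M. T i \<omega> \<le> 0}"]) (auto simp: emeasure_eq_measure)
  then have "AE \<omega> in M. 0 \<le> T i \<omega>" for i
    by (rule eventually_mono[OF _ less_imp_le])
  then show ?thesis by (simp add: AE_all_countable)
qed

lemma (in prob_space) prob_all_le_exponential:
  fixes T :: "nat \<Rightarrow> 'a \<Rightarrow> real"
  assumes indep: "indep_vars (\<lambda>_. borel) T UNIV"
    and distr: "\<And>i. distributed M lborel (T i) (exponential_density \<beta>)"
    and "0 < \<beta>" and "0 \<le> b"
  shows "prob {\<omega>\<in>space M. \<forall>i\<le>n. T i \<omega> \<le> b} = (1 - exp (- b * \<beta>)) ^ Suc n"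
proof -
  have "{\<omega>\<in>space M. \<forall>i\<le>n. T i \<omega> \<le> b} = (\<Inter>i\<in>{..n}. T i -` {..b} \<inter> space M)"
    by auto
  also have "prob \<dots> = (\<Prod>i\<le>n. prob (T i -` {..b} \<inter> space M))"
    by (rule indep_varsD[OF indep]) auto
  also have "\<dots> = (\<Prod>i\<le>n. 1 - exp (- b * \<beta>))"
    using exponential_distributedD_le[OF distr assms(4,3)]
    by (intro prod.cong refl) (simp add: vimage_def Int_def conj_commute)
  finally show ?thesis by simp
qed

lemma (in prob_space) ex_prob_partial_sum_exponential_gt:
  fixes T :: "nat \<Rightarrow> 'a \<Rightarrow> real"
  assumes indep: "indep_vars (\<lambda>_. borel) T UNIV"
    and distr: "\<And>i. distributed M lborel (T i) (exponential_density \<beta>)"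
    and "0 < \<beta>" and "0 \<le> b" and "0 < \<eta>"
  shows "\<exists>n. 1 - \<eta> \<le> prob {\<omega>\<in>space M. (\<forall>i. 0 \<le> T i \<omega>) \<and> b < (\<Sum>i\<le>n. T i \<omega>)}"
proof -
  define \<rho> where "\<rho> = 1 - exp (- b * \<beta>)"
  have \<rho>: "0 \<le> \<rho>" "\<rho> < 1" using assms unfolding \<rho>_def by auto
  obtain n where n: "\<rho> ^ n < \<eta>" using real_arch_pow_inv[OF \<open>0 < \<eta>\<close> \<rho>(2)] by blast
  have [measurable]: "T i \<in> borel_measurable M" for i
    using distributed_measurable[OF distr] by simp
  define W where "W = {\<omega>\<in>space M. \<forall>i. 0 \<le> T i \<omega>}"
  define B where "B = {\<omega>\<in>space M. \<forall>i\<le>n. T i \<omega> \<le> b}"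
  have [measurable]: "W \<in> events" "B \<in> events" unfolding W_def B_def by measurable
  have "prob W = 1"
    using AE_exponential_nonneg[OF distr assms(3)] unfolding W_def
    by (subst prob_Collect_eq_1) auto
  moreover have "prob B < \<eta>"
  proof -
    have "prob B = \<rho> ^ Suc n"
      unfolding B_def \<rho>_def by (rule prob_all_le_exponential[OF indep distr assms(3,4)])
    also have "\<dots> \<le> \<rho> ^ n" using \<rho> by (simp add: mult_left_le_one_le)
    finally show ?thesis using n by simp
  qed
  moreover have "W - B \<subseteq> {\<omega>\<in>space M. (\<forall>i. 0 \<le> T i \<omega>) \<and> b < (\<Sum>i\<le>n. T i \<omega>)}"
  proof
    fix \<omega> assume \<omega>: "\<omega> \<in> W - B"
    then obtain j where "j \<le> n" "b < T j \<omega>" unfolding B_def W_def by auto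
    moreover have "T j \<omega> \<le> (\<Sum>i\<le>n. T i \<omega>)"
      using \<omega> \<open>j \<le> n\<close> by (intro member_le_sum) (auto simp: W_def)
    ultimately show "\<omega> \<in> {\<omega>\<in>space M. (\<forall>i. 0 \<le> T i \<omega>) \<and> b < (\<Sum>i\<le>n. T i \<omega>)}"
      using \<omega> unfolding W_def by auto
  qed
  then have "prob (W - B) \<le> prob {\<omega>\<in>space M. (\<forall>i. 0 \<le> T i \<omega>) \<and> b < (\<Sum>i\<le>n. T i \<omega>)}"
    by (intro finite_measure_mono) measurable
  moreover have "prob (W \<inter> B) \<le> prob B" by (intro finite_measure_mono) auto
  ultimately show ?thesis
    using finite_measure_Diff'[of W B] by (intro exI[of _ n]) (simp add: prob_space)
qed

lemma (in prob_space) prob_le_tendsto_1: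
  fixes Y :: "'a \<Rightarrow> real"
  assumes "random_variable borel Y"
  shows "((\<lambda>x. prob {\<omega>\<in>space M. Y \<omega> \<le> x}) \<longlongrightarrow> 1) at_top"
proof -
  have "cdf (distr M borel Y) = (\<lambda>x. prob {\<omega>\<in>space M. Y \<omega> \<le> x})"
    using assms by (simp add: fun_eq_iff cdf_def measure_distr vimage_def Int_def conj_commute)
  then show ?thesis
    using real_distribution.cdf_lim_at_top_prob[of "distr M borel Y"] assms by simp
qed

lemma CL_N_le_of_sum_gt:
  assumes "\<And>i. 0 \<le> T i \<omega>" and "t < (\<Sum>i\<le>n. T i \<omega>)"
  shows "CL_N T t \<omega> \<le> n"
proof -
  have "{m. (\<Sum>i\<le>m. T i \<omega>) \<le> t} \<subseteq> {..<n}"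
  proof (intro subsetI, rule ccontr)
    fix m assume "m \<in> {m. (\<Sum>i\<le>m. T i \<omega>) \<le> t}" and "m \<notin> {..<n}"
    then have "(\<Sum>i\<le>n. T i \<omega>) \<le> t"
      using sum_mono2[of "{..m}" "{..n}" "\<lambda>i. T i \<omega>"] assms(1) by force
    with assms(2) show False by simp
  qed
  then show ?thesis unfolding CL_N_def using card_mono[of "{..<n}"] by fastforce
qed

lemma ruin_time_const_ge:
  assumes "\<And>i. 0 \<le> T i \<omega>" and "b < (\<Sum>i\<le>n. T i \<omega>)"
    and "(\<Sum>i<n. \<bar>U i \<omega>\<bar>) + d * b \<le> x" and "0 \<le> p" and "0 \<le> d"
  shows "ereal b \<le> ruin_time x p T U (\<lambda>_ _. d) \<omega>"
  unfolding ruin_time_def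
proof (rule Inf_greatest, clarify, rule ccontr)
  fix t assume t: "0 \<le> t" "CL_XC x p T U (\<lambda>_ _. d) t \<omega> < 0" and "\<not> ereal b \<le> ereal t"
  then have "t < b" by simp
  then have "CL_N T t \<omega> \<le> n"
    using assms(1,2) by (intro CL_N_le_of_sum_gt) auto
  then have "(\<Sum>i<CL_N T t \<omega>. U i \<omega>) \<le> (\<Sum>i<n. \<bar>U i \<omega>\<bar>)"
    using sum_mono2[of "{..<n}" "{..<CL_N T t \<omega>}" "\<lambda>i. \<bar>U i \<omega>\<bar>"]
      sum_mono[of "{..<CL_N T t \<omega>}" "\<lambda>i. U i \<omega>" "\<lambda>i. \<bar>U i \<omega>\<bar>"] by force
  moreover have "d * t \<le> d * b" using \<open>t < b\<close> assms(5) by (simp add: mult_left_mono)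
  moreover have "0 \<le> p * t" using assms(4) t(1) by simp
  ultimately have "0 \<le> CL_XC x p T U (\<lambda>_ _. d) t \<omega>"
    using t(1) assms(3) unfolding CL_XC_def CL_X_def by (simp add: mult.commute)
  with t(2) show False by simp
qed

lemma admissible_const:
  assumes "0 < x" and "c \<le> d" and "d \<le> cbar"
  shows "admissible M x p T U c cbar (\<lambda>_ _. d)"
proof -
  have adapted: "{\<omega>\<in>space M. d \<in> D} \<in> CL_filtration M x p T U t" for t D
  proof -
    let ?G = "{CL_X x p T U s -` D \<inter> space M | s D. 0 \<le> s \<and> s \<le> t \<and> D \<in> sets borel}"
    have "{} \<in> sigma_sets (space M) ?G" "space M \<in> sigma_sets (space M) ?G"
      by (rule sigma_sets.Empty, rule sigma_sets_top)
    then have "{\<omega>\<in>space M. d \<in> D} \<in> sigma_sets (space M) ?G"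
      by (cases "d \<in> D") simp_all
    then show ?thesis
      unfolding CL_filtration_def by (intro CollectI conjI bexI) auto
  qed
  have "d = p" if "((\<lambda>_. d) \<longlongrightarrow> p) (at_left (t::real))" for t
    using that tendsto_const_iff[of "at_left t" d p] trivial_limit_at_left_real by auto
  then show ?thesis
    using assms adapted unfolding admissible_def
    by (intro conjI ballI allI impI) (auto intro: mono_onI)
qed

lemma CL_J_le:
  assumes "prob_space M" and "0 < q" and "0 \<le> d"
    and "\<And>\<omega> t. \<omega> \<in> space M \<Longrightarrow> 0 \<le> t \<Longrightarrow> C t \<omega> \<le> d"
  shows "CL_J M q x p T U C \<le> ennreal (d / q)"
proof -
  have "(\<integral>\<^sup>+ s. indicator {s. 0 \<le> s \<and> ereal s < ruin_time x p T U C \<omega>} s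
           * ennreal (exp (- q * s) * C s \<omega>) \<partial>lborel) \<le> ennreal (d / q)"
    if "\<omega> \<in> space M" for \<omega>
  proof -
    have "(\<integral>\<^sup>+ s. indicator {s. 0 \<le> s \<and> ereal s < ruin_time x p T U C \<omega>} s
           * ennreal (exp (- q * s) * C s \<omega>) \<partial>lborel)
        \<le> (\<integral>\<^sup>+ s. ennreal (d / q) * ennreal (exponential_density q s) \<partial>lborel)"
    proof (intro nn_integral_mono)
      fix s
      have "exp (- q * s) * C s \<omega> \<le> d / q * exponential_density q s" if "0 \<le> s"
        using assms(2) assms(4)[OF \<open>\<omega> \<in> space M\<close> that] that
        by (simp add: exponential_density_def mult.commute)
      then show "indicator {s. 0 \<le> s \<and> ereal s < ruin_time x p T U C \<omega>} s
           * ennreal (exp (- q * s) * C s \<omega>) \<le> ennreal (d / q) * ennreal (exponential_density q s)"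
        using assms(2,3) by (auto simp: indicator_def ennreal_mult'[symmetric] ennreal_leI)
    qed
    also have "\<dots> = ennreal (d / q)"
      using prob_space.emeasure_space_1[OF prob_space_exponential_density[OF assms(2)]]
      by (simp add: nn_integral_cmult emeasure_density)
    finally show ?thesis .
  qed
  then have "CL_J M q x p T U C \<le> (\<integral>\<^sup>+ \<omega>. ennreal (d / q) \<partial>M)"
    unfolding CL_J_def by (intro nn_integral_mono)
  also have "\<dots> = ennreal (d / q)"
    using prob_space.emeasure_space_1[OF assms(1)] by simp
  finally show ?thesis .
qed

lemma CL_V_le:
  assumes "prob_space M" and "0 < q" and "0 \<le> cbar"
  shows "CL_V M q cbar p T U x c \<le> ennreal (cbar / q)"
  unfolding CL_V_def
  by (intro SUP_least CL_J_le[OF assms]) (auto simp: admissible_def)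

lemma discounted_integral_ge:
  assumes "ereal b \<le> \<tau>" and "t0 < b" and "0 \<le> t0" and "0 < q" and "0 \<le> d"
  shows "ennreal (d / q * (1 - exp (- q * t0))) \<le>
    (\<integral>\<^sup>+ s. indicator {s. 0 \<le> s \<and> ereal s < \<tau>} s * ennreal (exp (- q * s) * d) \<partial>lborel)"
proof -
  have "ennreal (d / q * (1 - exp (- q * t0)))
      = ennreal ((\<lambda>s. - d / q * exp (- q * s)) t0 - (\<lambda>s. - d / q * exp (- q * s)) 0)"
    by (simp add: algebra_simps diff_divide_distrib)
  also have "\<dots> = (\<integral>\<^sup>+ s. ennreal (exp (- q * s) * d) * indicator {0..t0} s \<partial>lborel)"
    by (rule nn_integral_FTC_Icc[symmetric])
      (use assms(3-5) in \<open>auto intro!: derivative_eq_intros simp: field_simps\<close>)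
  also have "\<dots> \<le> (\<integral>\<^sup>+ s. indicator {s. 0 \<le> s \<and> ereal s < \<tau>} s * ennreal (exp (- q * s) * d) \<partial>lborel)"
  proof (intro nn_integral_mono)
    fix s
    have "ereal s < \<tau>" if "s \<le> t0"
    proof -
      have "ereal s < ereal b" using that assms(2) by simp
      then show ?thesis using assms(1) by (rule less_le_trans)
    qed
    then show "ennreal (exp (- q * s) * d) * indicator {0..t0} s
        \<le> indicator {s. 0 \<le> s \<and> ereal s < \<tau>} s * ennreal (exp (- q * s) * d)"
      by (auto simp: indicator_def)
  qed
  finally show ?thesis .
qed

lemma CL_V_ge_const_strategy:
  fixes T U :: "nat \<Rightarrow> 'a \<Rightarrow> real"
  assumes [measurable]: "\<And>i. T i \<in> borel_measurable M" "\<And>i. U i \<in> borel_measurable M"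
    and "0 < x" and "c \<le> cbar" and "0 \<le> cbar" and "0 \<le> p" and "0 < q"
    and "0 \<le> t0" and "t0 < b"
  shows "ennreal (cbar / q * (1 - exp (- q * t0))) * emeasure M
      {\<omega>\<in>space M. (\<forall>i. 0 \<le> T i \<omega>) \<and> b < (\<Sum>i\<le>n. T i \<omega>) \<and> (\<Sum>i<n. \<bar>U i \<omega>\<bar>) + cbar * b \<le> x}
    \<le> CL_V M q cbar p T U x c"
proof -
  define H where
    "H = {\<omega>\<in>space M. (\<forall>i. 0 \<le> T i \<omega>) \<and> b < (\<Sum>i\<le>n. T i \<omega>) \<and> (\<Sum>i<n. \<bar>U i \<omega>\<bar>) + cbar * b \<le> x}"
  have [measurable]: "H \<in> sets M" unfolding H_def by measurable
  have "ennreal (cbar / q * (1 - exp (- q * t0))) * emeasure M H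
      = (\<integral>\<^sup>+ \<omega>. ennreal (cbar / q * (1 - exp (- q * t0))) * indicator H \<omega> \<partial>M)"
    by (simp add: nn_integral_cmult_indicator)
  also have "\<dots> \<le> CL_J M q x p T U (\<lambda>_ _. cbar)"
    unfolding CL_J_def
  proof (intro nn_integral_mono)
    fix \<omega>
    show "ennreal (cbar / q * (1 - exp (- q * t0))) * indicator H \<omega> \<le>
        (\<integral>\<^sup>+ s. indicator {s. 0 \<le> s \<and> ereal s < ruin_time x p T U (\<lambda>_ _. cbar) \<omega>} s
           * ennreal (exp (- q * s) * cbar) \<partial>lborel)"
    proof (cases "\<omega> \<in> H")
      case True
      then have "ereal b \<le> ruin_time x p T U (\<lambda>_ _. cbar) \<omega>"
        using assms by (intro ruin_time_const_ge[where n=n]) (auto simp: H_def)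
      with True show ?thesis
        using discounted_integral_ge[of b _ t0 q cbar] assms by simp
    qed simp
  qed
  also have "\<dots> \<le> CL_V M q cbar p T U x c"
    unfolding CL_V_def using admissible_const[of x c cbar cbar] assms
    by (intro SUP_upper) simp_all
  finally show ?thesis unfolding H_def .
qed

lemma (in prob_space) ex_eventually_prob_claims_bounded_until:
  fixes T U :: "nat \<Rightarrow> 'a \<Rightarrow> real"
  assumes indep: "indep_vars (\<lambda>_. borel) T UNIV"
    and distr: "\<And>i. distributed M lborel (T i) (exponential_density \<beta>)"
    and [measurable]: "\<And>i. U i \<in> borel_measurable M"
    and "0 < \<beta>" and "0 \<le> b" and "0 < \<eta>"
  shows "\<exists>n. \<forall>\<^sub>F x in at_top. 1 - \<eta> \<le> prob
      {\<omega>\<in>space M. (\<forall>i. 0 \<le> T i \<omega>) \<and> b < (\<Sum>i\<le>n. T i \<omega>) \<and> (\<Sum>i<n. \<bar>U i \<omega>\<bar>) + d * b \<le> x}"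
proof -
  have [measurable]: "T i \<in> borel_measurable M" for i
    using distributed_measurable[OF distr] by simp
  obtain n where n: "1 - \<eta> / 2 \<le> prob {\<omega>\<in>space M. (\<forall>i. 0 \<le> T i \<omega>) \<and> b < (\<Sum>i\<le>n. T i \<omega>)}"
    using ex_prob_partial_sum_exponential_gt[OF indep distr assms(4,5), of "\<eta> / 2"] assms(6) by auto
  define G where "G = {\<omega>\<in>space M. (\<forall>i. 0 \<le> T i \<omega>) \<and> b < (\<Sum>i\<le>n. T i \<omega>)}"
  define E where "E x = {\<omega>\<in>space M. (\<Sum>i<n. \<bar>U i \<omega>\<bar>) + d * b \<le> x}" for x
  have [measurable]: "G \<in> events" "E x \<in> events" for x unfolding G_def E_def by measurable
  have "\<forall>\<^sub>F x in at_top. 1 - \<eta> / 2 < prob (E x)"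
    unfolding E_def using assms(6)
    by (intro order_tendstoD(1)[OF prob_le_tendsto_1]) auto
  then have "\<forall>\<^sub>F x in at_top. 1 - \<eta> \<le> prob (G \<inter> E x)"
  proof (rule eventually_mono)
    fix x assume "1 - \<eta> / 2 < prob (E x)"
    moreover have "prob (G \<union> E x) = prob G + prob (E x) - prob (G \<inter> E x)"
      by (intro measure_Un3) (auto simp: fmeasurable_def less_top[symmetric])
    moreover have "prob (G \<union> E x) \<le> 1" by (rule prob_le_1)
    ultimately show "1 - \<eta> \<le> prob (G \<inter> E x)" using n unfolding G_def by linarith
  qed
  moreover have "G \<inter> E x = {\<omega>\<in>space M. (\<forall>i. 0 \<le> T i \<omega>) \<and> b < (\<Sum>i\<le>n. T i \<omega>)
      \<and> (\<Sum>i<n. \<bar>U i \<omega>\<bar>) + d * b \<le> x}" for x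
    unfolding G_def E_def by auto
  ultimately show ?thesis by auto
qed

lemma (in prob_space) eventually_CL_V_ge:
  fixes T U :: "nat \<Rightarrow> 'a \<Rightarrow> real"
  assumes indep: "indep_vars (\<lambda>_. borel) T UNIV"
    and distr: "\<And>i. distributed M lborel (T i) (exponential_density \<beta>)"
    and [measurable]: "\<And>i. U i \<in> borel_measurable M"
    and "0 < \<beta>" and "0 \<le> p" and "0 < q" and "0 \<le> cbar" and "c \<le> cbar"
    and "0 < \<eta>" and "\<eta> < 1"
  shows "\<forall>\<^sub>F x in at_top. ennreal (cbar / q * (1 - \<eta>)\<^sup>2) \<le> CL_V M q cbar p T U x c"
proof -
  define t0 where "t0 = - ln \<eta> / q"
  have t0: "0 \<le> t0" "exp (- q * t0) = \<eta>"
    using assms(6,9,10) unfolding t0_def by (auto simp: field_simps)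
  obtain n where "\<forall>\<^sub>F x in at_top. 1 - \<eta> \<le> prob {\<omega>\<in>space M. (\<forall>i. 0 \<le> T i \<omega>)
      \<and> t0 + 1 < (\<Sum>i\<le>n. T i \<omega>) \<and> (\<Sum>i<n. \<bar>U i \<omega>\<bar>) + cbar * (t0 + 1) \<le> x}"
    using ex_eventually_prob_claims_bounded_until[OF indep distr _ assms(4), of U "t0 + 1" \<eta>]
      t0 assms(9) by auto
  with eventually_gt_at_top[of 0] show ?thesis
  proof eventually_elim
    case (elim x)
    have "ennreal (cbar / q * (1 - \<eta>)\<^sup>2)
        = ennreal (cbar / q * (1 - exp (- q * t0))) * ennreal (1 - \<eta>)"
      using t0 assms(6,7,10) by (simp add: ennreal_mult[symmetric] power2_eq_square mult.assoc)
    also have "\<dots> \<le> ennreal (cbar / q * (1 - exp (- q * t0))) * emeasure M {\<omega>\<in>space M.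
        (\<forall>i. 0 \<le> T i \<omega>) \<and> t0 + 1 < (\<Sum>i\<le>n. T i \<omega>) \<and> (\<Sum>i<n. \<bar>U i \<omega>\<bar>) + cbar * (t0 + 1) \<le> x}"
      using elim by (intro mult_left_mono) (auto simp: emeasure_eq_measure ennreal_leI)
    also have "\<dots> \<le> CL_V M q cbar p T U x c"
      using elim assms distributed_measurable[OF distr] t0
      by (intro CL_V_ge_const_strategy) auto
    finally show ?case .
  qed
qed

lemma (in prob_space) eventually_CL_V_gt:
  fixes T U :: "nat \<Rightarrow> 'a \<Rightarrow> real"
  assumes indep: "indep_vars (\<lambda>_. borel) T UNIV"
    and distr: "\<And>i. distributed M lborel (T i) (exponential_density \<beta>)"
    and "\<And>i. U i \<in> borel_measurable M"
    and "0 < \<beta>" and "0 \<le> p" and "0 < q" and "0 \<le> cbar" and "c \<le> cbar"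
    and "a < ennreal (cbar / q)"
  shows "\<forall>\<^sub>F x in at_top. a < CL_V M q cbar p T U x c"
proof -
  have "((\<lambda>\<eta>. ennreal (cbar / q * (1 - \<eta>)\<^sup>2)) \<longlongrightarrow> ennreal (cbar / q)) (at_right 0)"
    using assms(6) by (auto intro!: tendsto_eq_intros)
  then have "\<forall>\<^sub>F \<eta> in at_right 0. a < ennreal (cbar / q * (1 - \<eta>)\<^sup>2)"
    using assms(9) by (rule order_tendstoD(1))
  moreover have "\<forall>\<^sub>F \<eta> in at_right (0::real). \<eta> < 1"
    unfolding eventually_at_right_field by (intro exI[of _ 1]) auto
  moreover note eventually_at_right_less[of 0]
  ultimately have "\<forall>\<^sub>F \<eta> in at_right 0. 0 < \<eta> \<and> \<eta> < 1 \<and> a < ennreal (cbar / q * (1 - \<eta>)\<^sup>2)"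
    by eventually_elim blast
  then obtain \<eta> where "0 < \<eta>" "\<eta> < 1" and a: "a < ennreal (cbar / q * (1 - \<eta>)\<^sup>2)"
    by (auto dest: eventually_happens simp: trivial_limit_at_right_real)
  then have "\<forall>\<^sub>F x in at_top. ennreal (cbar / q * (1 - \<eta>)\<^sup>2) \<le> CL_V M q cbar p T U x c"
    using assms by (intro eventually_CL_V_ge[OF indep distr]) auto
  then show ?thesis
    by (rule eventually_mono) (rule less_le_trans[OF a])
qed

theorem proposition4p5:
  fixes M :: "'a measure"
    and T U :: "nat \<Rightarrow> 'a \<Rightarrow> real"
    and F :: "real \<Rightarrow> real"
    and p \<beta> K cbar q :: real
  assumes "prob_space M"
    and "p > 0" and "\<beta> > 0"
    and "prob_space.indep_vars M (\<lambda>_. borel)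
           (\<lambda>k. case k of Inl i \<Rightarrow> T i | Inr i \<Rightarrow> U i) (UNIV :: (nat + nat) set)"
    and "\<And>i. distributed M lborel (T i) (exponential_density \<beta>)"
    and "\<And>i x. measure M {\<omega> \<in> space M. U i \<omega> \<le> x} = F x"
    and "\<And>i. AE \<omega> in M. U i \<omega> > 0"
    and "continuous_on UNIV F"
    and "K > 0" and "\<And>x y. \<bar>F x - F y\<bar> \<le> K * \<bar>x - y\<bar>"
    and "ennreal p > ennreal \<beta> * (\<integral>\<^sup>+ \<omega>. ennreal (U 0 \<omega>) \<partial>M)"
    and "cbar > 0" and "q > 0"
    and "c \<in> {0..cbar}"
  shows "((\<lambda>x. CL_V M q cbar p T U x c) \<longlongrightarrow> ennreal (cbar / q)) at_top"
proof -
  interpret prob_space M by fact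
  have "random_variable borel (case k of Inl i \<Rightarrow> T i | Inr i \<Rightarrow> U i)" for k
    using assms(4) unfolding indep_vars_def2 by simp
  from this[of "Inr i" for i] have [measurable]: "U i \<in> borel_measurable M" for i
    by simp
  have indep: "indep_vars (\<lambda>_. borel) T UNIV"
    using indep_vars_reindex[OF indep_vars_subset[OF assms(4)], of Inl UNIV] by simp
  show ?thesis
  proof (rule order_tendstoI)
    fix a assume "ennreal (cbar / q) < a"
    then show "\<forall>\<^sub>F x in at_top. CL_V M q cbar p T U x c < a"
      using CL_V_le[OF assms(1,13), of cbar] assms(12)
      by (intro always_eventually allI) (metis le_less_trans less_imp_le)
  next
    fix a assume "a < ennreal (cbar / q)"
    with assms(2,3,12,13,14) show "\<forall>\<^sub>F x in at_top. a < CL_V M q cbar p T U x c"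
      by (intro eventually_CL_V_gt[OF indep assms(5)]) auto
  qed
qed

end
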